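(* Let $r$ be even with $r\mid n$, and let $\pi=(1,2,\dots,r)(r+1,\dots,2r)\cdots(n-r+1,\dots,n)\in S_n$, with centralizer $Z(\pi)$ in $S_n$. Then $$\sum_{w\in I_n\cap Z(\pi)}(-1)^{\mathrm{inv}_w(\pi)}=\begin{cases}0,& n/r\text{ odd},\\ \dfrac{(n/r)!}{(n/(2r))!\,2^{n/(2r)}}\,r^{n/(2r)},& n/r\text{ even}.\end{cases}$$
   Context: $I_n$ is the set of involutions (including identity) of $S_n$. For $w\in I_n$, $\mathrm{Pair}(w)$ is the set of 2-cycles of $w$ as unordered 2-subsets; $\mathrm{Inv}(\pi)=\{\{i,j\}:(j-i)(\pi(j)-\pi(i))<0\}$; $\mathrm{inv}_w(\pi)=\#(\mathrm{Inv}(\pi)\cap\mathrm{Pair}(w))$. *)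

theory Defs
  imports Complex_Main "HOL-Combinatorics.Permutations"
begin

text \<open>Permutations of [n] = {1..n} are functions nat => nat permuting {1..n}
  (identity outside).\<close>

definition involutions :: "nat \<Rightarrow> (nat \<Rightarrow> nat) set" where
  "involutions n = {w. w permutes {1..n} \<and> w \<circ> w = id}"

definition centralizer :: "nat \<Rightarrow> (nat \<Rightarrow> nat) \<Rightarrow> (nat \<Rightarrow> nat) set" where
  "centralizer n p = {w. w permutes {1..n} \<and> w \<circ> p = p \<circ> w}"

definition Pairs :: "nat \<Rightarrow> (nat \<Rightarrow> nat) \<Rightarrow> nat set set" where
  "Pairs n w = {{i, w i} | i. i \<in> {1..n} \<and> w i \<noteq> i}"

definition Inv :: "nat \<Rightarrow> (nat \<Rightarrow> nat) \<Rightarrow> nat set set" where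
  "Inv n p = {{i, j} | i j. i \<in> {1..n} \<and> j \<in> {1..n} \<and>
       (int j - int i) * (int (p j) - int (p i)) < 0}"

definition inv_w :: "nat \<Rightarrow> (nat \<Rightarrow> nat) \<Rightarrow> (nat \<Rightarrow> nat) \<Rightarrow> nat" where
  "inv_w n w p = card (Inv n p \<inter> Pairs n w)"

text \<open>The product of consecutive r-cycles (1..r)(r+1..2r)...(n-r+1..n).\<close>
definition cycprod :: "nat \<Rightarrow> nat \<Rightarrow> nat \<Rightarrow> nat" where
  "cycprod n r i = (if i \<in> {1..n} then (if i mod r = 0 then i + 1 - r else i + 1) else i)"

end

theory Submission
  imports Defs
begin

(* Put m = n div r.  The points 1..n form m consecutive blocks of length r, and
   P = cycprod n r rotates every block by one step.  An involution w commuting with P that sends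
   the first point of block a into block c acts on block a as the shift by a fixed offset s into
   block c, and, being an involution, on block c as the inverse shift; for c = a this forces
   2s = 0 (mod r), i.e. s \<in> {0, r/2}.  Hence the involutions supported on a set A of blocks and
   commuting with P arise uniquely by gluing such a block pairing onto an involution supported
   on A - {a, c}.  The inversions of P are exactly the pairs of distinct points of one block one of
   which is the last point of the block.  So gluing two different blocks preserves the sign, while
   for c = a the offsets 0 and r/2 give opposite signs and cancel.  The signed sum S(A) therefore
   satisfies S(A) = (|A| - 1) r S(|A| - 2), S({}) = 1, whose solution is the closed form claimed. *)

section \<open>The recurrence and its closed form\<close>

text \<open>matching_weight r k is r^(k/2) times the number of perfect matchings of k points.\<close>

fun matching_weight :: "nat \<Rightarrow> nat \<Rightarrow> real" where
  "matching_weight r 0 = 1"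
| "matching_weight r (Suc 0) = 0"
| "matching_weight r (Suc (Suc k)) = real r * real (Suc k) * matching_weight r k"

text \<open>The recurrence in the form produced by the block decomposition.\<close>

lemma matching_weight_step:
  "0 < k \<Longrightarrow> matching_weight r k = real (k - 1) * real r * matching_weight r (k - 2)"
  by (cases "(r, k)" rule: matching_weight.cases) simp_all

lemma matching_weight_closed:
  "matching_weight r k =
     (if odd k then 0 else fact k / (fact (k div 2) * 2 ^ (k div 2)) * real r ^ (k div 2))"
proof (induction r k rule: matching_weight.induct)
  case (3 r k)
  show ?case
  proof (cases "odd k")
    case False
    then obtain j where k: "k = 2 * j" by (auto elim: evenE)
    have num: "(fact (Suc (Suc k)) :: real) = (2 * (real j + 1)) * ((real k + 1) * fact k)"
      unfolding k by (simp add: algebra_simps)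
    have den: "(fact (Suc j) :: real) * 2 ^ Suc j = (2 * (real j + 1)) * (fact j * 2 ^ j)"
      by (simp add: algebra_simps)
    have "(fact (Suc (Suc k)) :: real) / (fact (Suc j) * 2 ^ Suc j)
          = ((real k + 1) * fact k) / (fact j * 2 ^ j)"
      unfolding num den by (rule mult_divide_mult_cancel_left) simp
    then show ?thesis using 3 False k by (simp add: algebra_simps)
  qed (use 3 in simp)
qed simp_all

lemma involution_permutes:
  assumes "\<And>x. f (f x) = x" and "\<And>x. x \<notin> S \<Longrightarrow> f x = x"
  shows "f permutes S"
  unfolding permutes_def
proof (intro conjI allI impI)
  show "\<exists>!x. f x = y" for y
    by (rule ex1I[of _ "f y"]) (use assms(1) in metis)+
qed (use assms(2) in blast)

definition moved_pairs :: "nat set \<Rightarrow> (nat \<Rightarrow> nat) \<Rightarrow> nat set set" where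
  "moved_pairs X w = (\<lambda>i. {i, w i}) ` {i \<in> X. w i \<noteq> i}"

lemma Pairs_eq_moved_pairs: "Pairs n w = moved_pairs {1..n} w"
  unfolding Pairs_def moved_pairs_def by blast

lemma finite_moved_pairs: "finite X \<Longrightarrow> finite (moved_pairs X w)"
  by (simp add: moved_pairs_def)

lemma card_moved_pairs_modify:
  assumes XY: "X \<subseteq> Y" and Y: "finite Y"
    and agree: "\<And>x. x \<notin> X \<Longrightarrow> g x = v x" and fixed: "\<And>x. x \<in> X \<Longrightarrow> v x = x"
    and into: "\<And>x. x \<in> X \<Longrightarrow> g x \<in> X"
  shows "card (I \<inter> moved_pairs Y g) = card (I \<inter> moved_pairs X g) + card (I \<inter> moved_pairs Y v)"
proof -
  have moved: "{i \<in> Y. g i \<noteq> i} = {i \<in> X. g i \<noteq> i} \<union> {i \<in> Y. v i \<noteq> i}"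
    using XY agree fixed by (auto; metis)
  have "g i = v i" if "v i \<noteq> i" for i
    using that agree fixed by metis
  then have "(\<lambda>i. {i, g i}) ` {i \<in> Y. v i \<noteq> i} = moved_pairs Y v"
    unfolding moved_pairs_def by (intro image_cong) auto
  then have split: "moved_pairs Y g = moved_pairs X g \<union> moved_pairs Y v"
    unfolding moved_pairs_def moved image_Un by simp
  have "e \<subseteq> X" if "e \<in> moved_pairs X g" for e
    using that into by (auto simp: moved_pairs_def)
  moreover have "\<not> e \<subseteq> X" if "e \<in> moved_pairs Y v" for e
    using that fixed by (auto simp: moved_pairs_def)
  ultimately have disj: "(I \<inter> moved_pairs X g) \<inter> (I \<inter> moved_pairs Y v) = {}" by blast
  have "finite (moved_pairs X g)" "finite (moved_pairs Y v)"
    using finite_moved_pairs finite_subset[OF XY Y] Y by blast+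
  then show ?thesis using disj by (simp add: split Int_Un_distrib card_Un_disjoint)
qed

section \<open>Block coordinates for the product of r-cycles\<close>

locale cycle_blocks =
  fixes m r :: nat
  assumes r_pos: "0 < r"
begin

abbreviation N :: nat where "N \<equiv> m * r"
abbreviation P :: "nat \<Rightarrow> nat" where "P \<equiv> cycprod (m * r) r"

definition blk :: "nat \<Rightarrow> nat" where "blk x = (x - 1) div r"
definition pos :: "nat \<Rightarrow> nat" where "pos x = (x - 1) mod r"
definition point :: "nat \<Rightarrow> nat \<Rightarrow> nat" where "point b k = b * r + 1 + k mod r"
definition block :: "nat \<Rightarrow> nat set" where "block b = {x \<in> {1..N}. blk x = b}"
definition support :: "nat set \<Rightarrow> nat set" where "support A = {x \<in> {1..N}. blk x \<in> A}"

lemma pos_less [simp]: "pos x < r"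
  using r_pos by (simp add: pos_def)

lemma blk_point [simp]: "blk (point b k) = b"
  using r_pos by (simp add: blk_def point_def)

lemma pos_point [simp]: "pos (point b k) = k mod r"
  using r_pos by (simp add: pos_def point_def)

lemma point_blk_pos [simp]: "1 \<le> x \<Longrightarrow> point (blk x) (pos x) = x"
  using div_mult_mod_eq[of "x - 1" r] by (simp add: point_def blk_def pos_def)

lemma point_eq_iff: "point b k = point b' k' \<longleftrightarrow> b = b' \<and> k mod r = k' mod r"
  by (metis blk_point pos_point point_def)

lemma point_mod_add_left [simp]: "point b (k mod r + j) = point b (k + j)"
  and point_mod_add_right [simp]: "point b (j + k mod r) = point b (j + k)"
  and point_Suc_mod [simp]: "point b (Suc (k mod r)) = point b (Suc k)"
  and point_add_r [simp]: "point b (k + r) = point b k"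
  by (simp_all add: point_def mod_add_left_eq mod_add_right_eq mod_Suc_eq)

lemma point_cong: "j mod r = 0 \<Longrightarrow> point b (j + k) = point b k"
  by (metis add_0 point_mod_add_left)

lemma blk_less: "x \<in> {1..N} \<Longrightarrow> blk x < m"
proof -
  assume "x \<in> {1..N}"
  then have "x - 1 < m * r" by auto
  then show ?thesis by (simp add: blk_def less_mult_imp_div_less)
qed

lemma point_in_block: "b < m \<Longrightarrow> point b k \<in> block b"
proof -
  assume "b < m"
  then have "Suc b * r \<le> m * r" by (intro mult_le_mono1) simp
  then have "b * r + r \<le> m * r" by simp
  moreover have "k mod r < r" using r_pos by simp
  ultimately have "point b k \<in> {1..N}" by (simp add: point_def)
  then show ?thesis by (simp add: block_def)
qed

lemma block_points: "x \<in> block b \<Longrightarrow> x \<in> {1..N} \<and> blk x = b \<and> point b (pos x) = x"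
  by (auto simp: block_def)

lemma P_eq: "x \<in> {1..N} \<Longrightarrow> P x = point (blk x) (Suc (pos x))"
proof -
  assume x: "x \<in> {1..N}"
  define b p where "b = blk x" and "p = pos x"
  have xbp: "x = b * r + p + 1" and p: "p < r"
    using point_blk_pos[of x] x by (auto simp: b_def p_def point_def)
  have "P x = point b (Suc p)"
  proof (cases "Suc p = r")
    case True
    then have "x mod r = 0" unfolding xbp by simp
    then have "P x = x + 1 - r" using x by (simp add: cycprod_def)
    then show ?thesis using True unfolding xbp by (simp add: point_def)
  next
    case False
    then have "Suc p < r" using p by simp
    then have "x mod r \<noteq> 0" unfolding xbp by simp
    then have "P x = x + 1" using x by (simp add: cycprod_def)
    then show ?thesis using \<open>Suc p < r\<close> unfolding xbp by (simp add: point_def)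
  qed
  then show ?thesis by (simp add: b_def p_def)
qed

lemma P_outside: "x \<notin> {1..N} \<Longrightarrow> P x = x"
  by (auto simp: cycprod_def)

lemma P_point: "b < m \<Longrightarrow> P (point b k) = point b (Suc k)"
  using point_in_block[of b k] by (simp add: P_eq block_def)

lemma P_block [simp]: "P x \<in> block b \<longleftrightarrow> x \<in> block b"
proof (cases "x \<in> {1..N}")
  case True
  then have "P x \<in> block (blk x)" using point_in_block blk_less True by (simp add: P_eq)
  then show ?thesis using True by (auto simp: block_def)
qed (simp add: P_outside)

lemma P_descent:
  assumes i: "i \<in> {1..N}" and j: "j \<in> {1..N}" and ij: "i < j"
  shows "P j < P i \<longleftrightarrow> blk i = blk j \<and> pos j = r - 1"
proof -
  have ie: "i = blk i * r + pos i + 1" and je: "j = blk j * r + pos j + 1"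
    using point_blk_pos[of i] point_blk_pos[of j] i j by (simp_all add: point_def)
  have Pi: "P i = blk i * r + 1 + Suc (pos i) mod r" and Pj: "P j = blk j * r + 1 + Suc (pos j) mod r"
    using i j by (simp_all add: P_eq point_def)
  have blk_le: "blk i \<le> blk j"
  proof (rule ccontr)
    assume "\<not> blk i \<le> blk j"
    then have "blk j * r + r \<le> blk i * r" by (metis Suc_leI not_le mult_Suc mult_le_mono1 add.commute)
    then show False using ij ie je pos_less[of j] by linarith
  qed
  have mods: "Suc (pos i) mod r < r" "Suc (pos j) mod r < r" using r_pos by simp_all
  show ?thesis
  proof
    assume desc: "P j < P i"
    have "\<not> blk i < blk j"
    proof
      assume "blk i < blk j"
      then have "blk i * r + r \<le> blk j * r" by (metis Suc_leI mult_Suc mult_le_mono1 add.commute)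
      then show False using desc Pi Pj mods by linarith
    qed
    then have same: "blk i = blk j" using blk_le by simp
    then have "pos i < pos j" using ij ie je by simp
    moreover have "\<not> Suc (pos j) < r" if "pos i < pos j"
      using desc Pi Pj same that by auto
    ultimately show "blk i = blk j \<and> pos j = r - 1" using same pos_less[of j] by linarith
  next
    assume "blk i = blk j \<and> pos j = r - 1"
    moreover from this have "Suc (pos i) < r" using ij ie je by simp
    ultimately show "P j < P i" using Pi Pj r_pos by simp
  qed
qed

lemma P_inversion_iff:
  assumes i: "i \<in> {1..N}" and j: "j \<in> {1..N}"
  shows "(int j - int i) * (int (P j) - int (P i)) < 0 \<longleftrightarrow>
           blk i = blk j \<and> i \<noteq> j \<and> (pos i = r - 1 \<or> pos j = r - 1)"
proof -
  have ordered: "(int y - int x) * (int (P y) - int (P x)) < 0 \<longleftrightarrow>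
      blk x = blk y \<and> (pos x = r - 1 \<or> pos y = r - 1)"
    if xy: "x \<in> {1..N}" "y \<in> {1..N}" "x < y" for x y
  proof -
    have "0 < int y - int x" using \<open>x < y\<close> by simp
    then have "(int y - int x) * (int (P y) - int (P x)) < 0 \<longleftrightarrow> P y < P x"
      by (simp add: mult_less_0_iff)
    moreover have "pos x \<noteq> r - 1" if "blk x = blk y"
    proof -
      have "pos x < pos y"
        using that xy point_blk_pos[of x] point_blk_pos[of y] by (auto simp: point_def)
      then show ?thesis using pos_less[of y] by linarith
    qed
    ultimately show ?thesis using P_descent[OF xy] by auto
  qed
  have sym: "(int j - int i) * (int (P j) - int (P i)) = (int i - int j) * (int (P i) - int (P j))"
    by (simp add: algebra_simps)
  show ?thesis
  proof (cases i j rule: linorder_cases)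
    case less
    then show ?thesis using ordered[OF i j less] by simp
  next
    case greater
    then show ?thesis using ordered[OF j i greater] sym by auto
  qed simp
qed

lemma Inv_P_iff:
  "{x, y} \<in> Inv N P \<longleftrightarrow>
     x \<in> {1..N} \<and> y \<in> {1..N} \<and> blk x = blk y \<and> x \<noteq> y \<and> (pos x = r - 1 \<or> pos y = r - 1)"
proof
  assume "{x, y} \<in> Inv N P"
  then obtain i j where "{x, y} = {i, j}" "i \<in> {1..N}" "j \<in> {1..N}"
    and "(int j - int i) * (int (P j) - int (P i)) < 0"
    unfolding Inv_def by blast
  then show "x \<in> {1..N} \<and> y \<in> {1..N} \<and> blk x = blk y \<and> x \<noteq> y \<and> (pos x = r - 1 \<or> pos y = r - 1)"
    using P_inversion_iff by (auto simp: doubleton_eq_iff)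
qed (use P_inversion_iff in \<open>auto simp: Inv_def\<close>)

definition shift :: "nat \<Rightarrow> nat \<Rightarrow> nat \<Rightarrow> nat" where
  "shift c s x = point c (s + pos x)"

lemma shift_in_block: "c < m \<Longrightarrow> shift c s x \<in> block c"
  by (simp add: shift_def point_in_block)

lemma shift_shift: "shift a t (shift c s x) = point a (t + s + pos x)"
  by (simp add: shift_def add.assoc)

lemma shift_cancel: "x \<in> block a \<Longrightarrow> (t + s) mod r = 0 \<Longrightarrow> shift a t (shift c s x) = x"
  using block_points[of x a] by (simp add: shift_shift point_cong)

lemma shift_P: "c < m \<Longrightarrow> x \<in> {1..N} \<Longrightarrow> shift c s (P x) = P (shift c s x)"
  by (simp add: shift_def P_eq P_point)

definition invols :: "nat set \<Rightarrow> (nat \<Rightarrow> nat) set" where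
  "invols A = {w. (\<forall>x. x \<notin> support A \<longrightarrow> w x = x) \<and> (\<forall>x. w (w x) = x) \<and> (\<forall>x. w (P x) = P (w x))}"

lemma involsI:
  assumes "\<And>x. x \<notin> support A \<Longrightarrow> w x = x" "\<And>x. w (w x) = x" "\<And>x. w (P x) = P (w x)"
  shows "w \<in> invols A"
  using assms by (simp add: invols_def)

lemma involsD:
  assumes "w \<in> invols A"
  shows "x \<notin> support A \<Longrightarrow> w x = x" and "w (w x) = x" and "w (P x) = P (w x)"
  using assms by (simp_all add: invols_def)

text \<open>Since w is an involution fixing the complement of support A, it maps support A to itself.\<close>

lemma invols_maps_support:
  assumes w: "w \<in> invols A" and x: "x \<in> support A"
  shows "w x \<in> support A"
proof (rule ccontr)
  assume "w x \<notin> support A"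
  then have "w (w x) = w x" by (rule involsD(1)[OF w])
  then show False using involsD(2)[OF w, of x] x \<open>w x \<notin> support A\<close> by simp
qed

lemma finite_invols: "finite (invols A)"
proof -
  have "w permutes support A" if "w \<in> invols A" for w
    by (rule involution_permutes) (use involsD[OF that] in auto)
  then have "invols A \<subseteq> {w. w permutes support A}" by blast
  moreover have "finite (support A)" by (simp add: support_def)
  ultimately show ?thesis using finite_permutations finite_subset by blast
qed

lemma invols_fixes_blocks:
  assumes v: "v \<in> invols (A - {a, c})" and x: "x \<in> block a \<union> block c"
  shows "v x = x"
proof (rule involsD(1)[OF v])
  show "x \<notin> support (A - {a, c})" using x by (auto simp: support_def block_def)
qed

lemma invols_avoids_blocks:
  assumes "v \<in> invols (A - {a, c})" and "x \<notin> block a \<union> block c"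
  shows "v x \<notin> block a \<union> block c"
proof
  assume vx: "v x \<in> block a \<union> block c"
  then have "v (v x) = v x" by (rule invols_fixes_blocks[OF assms(1)])
  then show False using involsD(2)[OF assms(1), of x] assms(2) vx by simp
qed

lemma commuting_map_is_shift:
  assumes comm: "\<And>x. w (P x) = P (w x)" and a: "a < m" and y: "w (point a 0) \<in> {1..N}"
    and x: "x \<in> block a"
  shows "w x = shift (blk (w (point a 0))) (pos (w (point a 0))) x"
proof -
  define y where "y = w (point a 0)"
  have orbit: "w (point a k) = point (blk y) (pos y + k)" for k
  proof (induction k)
    case 0
    show ?case using y by (simp add: y_def)
  next
    case (Suc k)
    have "w (point a (Suc k)) = P (w (point a k))" using P_point[OF a] comm by metis
    also have "\<dots> = point (blk y) (Suc (pos y + k))"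
      using Suc P_point blk_less y by (simp add: y_def)
    finally show ?case by simp
  qed
  have "w x = w (point a (pos x))" using block_points[OF x] by simp
  then show ?thesis using orbit[of "pos x"] by (simp add: shift_def y_def)
qed

definition glue :: "nat \<Rightarrow> nat \<Rightarrow> nat \<Rightarrow> (nat \<Rightarrow> nat) \<Rightarrow> nat \<Rightarrow> nat" where
  "glue a c s v x =
     (if x \<in> block a then shift c s x else if x \<in> block c then shift a (r - s) x else v x)"

text \<open>The admissible offsets: any s < r, except that a block paired with itself needs
  2s = 0 (mod r) for the shift to be an involution.\<close>

definition offsets :: "nat \<Rightarrow> nat \<Rightarrow> nat set" where
  "offsets a c = {s. s < r \<and> (a \<noteq> c \<or> (2 * s) mod r = 0)}"

text \<open>Gluing with an admissible offset yields an involution: the two shifts are mutually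
  inverse, and for a = c the shift by s is its own inverse because 2s = 0 (mod r).\<close>

lemma glue_involutive:
  assumes am: "a < m" and cm: "c < m" and s: "s \<in> offsets a c" and v: "v \<in> invols (A - {a, c})"
  shows "glue a c s v (glue a c s v x) = x"
proof -
  have sr: "s < r" using s by (simp add: offsets_def)
  consider "x \<in> block a" "a = c" | "x \<in> block a" "a \<noteq> c" | "x \<in> block c" "x \<notin> block a"
    | "x \<notin> block a \<union> block c" by blast
  then show ?thesis
  proof cases
    case 1
    then have "(s + s) mod r = 0" using s by (simp add: offsets_def mult_2)
    then show ?thesis using 1 shift_in_block[OF am] by (simp add: glue_def shift_cancel)
  next
    case 2
    have "shift c s x \<in> block c" "shift c s x \<notin> block a"
      using shift_in_block[OF cm] 2 by (auto simp: block_def)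
    moreover have "(r - s + s) mod r = 0" using sr by simp
    ultimately show ?thesis using 2 by (simp add: glue_def shift_cancel)
  next
    case 3
    have "(s + (r - s)) mod r = 0" using sr by simp
    then show ?thesis using 3 shift_in_block[OF am] by (simp add: glue_def shift_cancel)
  next
    case 4
    then show ?thesis using invols_avoids_blocks[OF v] involsD(2)[OF v] by (simp add: glue_def)
  qed
qed

lemma glue_commutes_P:
  assumes am: "a < m" and cm: "c < m" and v: "v \<in> invols (A - {a, c})"
  shows "glue a c s v (P x) = P (glue a c s v x)"
proof -
  consider "x \<in> block a" | "x \<in> block c" "x \<notin> block a" | "x \<notin> block a \<union> block c" by blast
  then show ?thesis
  proof cases
    case 1
    then have "x \<in> {1..N}" by (simp add: block_def)
    then show ?thesis using 1 shift_P[OF cm] by (simp add: glue_def)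
  next
    case 2
    then have "x \<in> {1..N}" by (simp add: block_def)
    then show ?thesis using 2 shift_P[OF am] by (simp add: glue_def)
  next
    case 3
    then show ?thesis using involsD(3)[OF v] by (simp add: glue_def)
  qed
qed

lemma glue_invols:
  assumes A: "A \<subseteq> {..<m}" and a: "a \<in> A" and c: "c \<in> A" and s: "s \<in> offsets a c"
    and v: "v \<in> invols (A - {a, c})"
  shows "glue a c s v \<in> invols A"
proof (rule involsI)
  have am: "a < m" and cm: "c < m" using A a c by auto
  show "glue a c s v x = x" if "x \<notin> support A" for x
  proof -
    have "x \<notin> block a \<union> block c" "x \<notin> support (A - {a, c})"
      using that a c by (auto simp: support_def block_def)
    then show ?thesis using involsD(1)[OF v] by (simp add: glue_def)
  qed
  show "glue a c s v (glue a c s v x) = x" for x by (rule glue_involutive[OF am cm s v])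
  show "glue a c s v (P x) = P (glue a c s v x)" for x by (rule glue_commutes_P[OF am cm v])
qed

text \<open>Conversely every w \<in> invols A is glued: the partner block of a and the offset are read
  off from the image of the first point of block a.\<close>

definition partner :: "nat \<Rightarrow> (nat \<Rightarrow> nat) \<Rightarrow> nat" where
  "partner a w = blk (w (point a 0))"

definition offset :: "nat \<Rightarrow> (nat \<Rightarrow> nat) \<Rightarrow> nat" where
  "offset a w = pos (w (point a 0))"

definition restr :: "nat \<Rightarrow> nat \<Rightarrow> (nat \<Rightarrow> nat) \<Rightarrow> nat \<Rightarrow> nat" where
  "restr a c w x = (if x \<in> block a \<union> block c then x else w x)"

context
  fixes A a w
  assumes A: "A \<subseteq> {..<m}" and a: "a \<in> A" and w: "w \<in> invols A"
begin

private lemma a_less: "a < m"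
  using A a by auto

lemma partner_mem: "partner a w \<in> A" and partner_image: "w (point a 0) \<in> {1..N}"
proof -
  have "point a 0 \<in> support A" using point_in_block[OF a_less] a by (simp add: support_def block_def)
  then have "w (point a 0) \<in> support A" using invols_maps_support[OF w] by blast
  then show "partner a w \<in> A" "w (point a 0) \<in> {1..N}" by (simp_all add: support_def partner_def)
qed

lemma invols_on_block:
  assumes "partner a w = c" and "offset a w = s" and "x \<in> block a"
  shows "w x = shift c s x"
  using commuting_map_is_shift[OF involsD(3)[OF w] a_less partner_image assms(3)] assms(1,2)
  by (simp add: partner_def offset_def)

lemma invols_on_partner_block:
  assumes c: "partner a w = c" and s: "offset a w = s" and x: "x \<in> block c"
  shows "w x = shift a (r - s) x"
proof -
  let ?y = "shift a (r - s) x"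
  have "s < r" using s pos_less by (metis offset_def)
  then have "(s + (r - s)) mod r = 0" by simp
  then have "w ?y = x"
    using invols_on_block[OF c s] shift_in_block[OF a_less] shift_cancel[OF x] by simp
  then show ?thesis using involsD(2)[OF w] by metis
qed

lemma offset_mem: "offset a w \<in> offsets a (partner a w)"
proof -
  obtain c s where c: "partner a w = c" and s: "offset a w = s" by blast
  have first: "w (point a 0) = point c s"
    using invols_on_block[OF c s point_in_block[OF a_less]] by (simp add: shift_def)
  have "(2 * s) mod r = 0" if "c = a"
  proof -
    have "point a 0 = w (point a s)" using first that involsD(2)[OF w] by metis
    also have "\<dots> = point a (2 * s)"
      using invols_on_block[OF c s point_in_block[OF a_less]] that by (simp add: shift_def mult_2)
    finally show ?thesis by (simp add: point_eq_iff)
  qed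
  moreover have "s < r" using s pos_less by (metis offset_def)
  ultimately show ?thesis using c s by (auto simp: offsets_def)
qed

lemma restr_invols:
  assumes c: "partner a w = c"
  shows "restr a c w \<in> invols (A - {a, c})"
proof (rule involsI)
  have cm: "c < m" using A partner_mem c by auto
  have closed: "w x \<in> block a \<union> block c" if x: "x \<in> block a \<union> block c" for x
  proof (cases "x \<in> block a")
    case True
    then show ?thesis using invols_on_block[OF c refl True] shift_in_block[OF cm] by simp
  next
    case False
    then have "x \<in> block c" using x by blast
    then show ?thesis using invols_on_partner_block[OF c refl] shift_in_block[OF a_less] by simp
  qed
  have preimage: "x \<in> block a \<union> block c" if "w x \<in> block a \<union> block c" for x
    using closed[OF that] involsD(2)[OF w] by simp
  show "restr a c w x = x" if "x \<notin> support (A - {a, c})" for x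
    using that involsD(1)[OF w] by (auto simp: restr_def support_def block_def)
  show "restr a c w (restr a c w x) = x" for x
    using preimage involsD(2)[OF w] by (auto simp: restr_def)
  show "restr a c w (P x) = P (restr a c w x)" for x
    using involsD(3)[OF w] by (simp add: restr_def)
qed

lemma glue_restr:
  assumes c: "partner a w = c" and s: "offset a w = s"
  shows "glue a c s (restr a c w) = w"
proof
  fix x
  show "glue a c s (restr a c w) x = w x"
    using invols_on_block[OF c s, of x] invols_on_partner_block[OF c s, of x]
    by (simp add: glue_def restr_def)
qed

end

lemma glue_bij:
  assumes A: "A \<subseteq> {..<m}" and a: "a \<in> A" and c: "c \<in> A"
  shows "bij_betw (\<lambda>(s, v). glue a c s v) (offsets a c \<times> invols (A - {a, c}))
           {w \<in> invols A. partner a w = c}"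
proof -
  have am: "a < m" using A a by auto
  have first: "glue a c s v (point a 0) = point c s" for s v
    using point_in_block[OF am] by (simp add: glue_def shift_def)
  have left: "(offset a (glue a c s v), restr a c (glue a c s v)) = (s, v)"
    if "s \<in> offsets a c" "v \<in> invols (A - {a, c})" for s v
    using first that invols_fixes_blocks[OF that(2)]
    by (auto simp: offset_def offsets_def restr_def glue_def fun_eq_iff)
  have right: "glue a c (offset a w) (restr a c w) = w" if "w \<in> invols A" "partner a w = c" for w
    using glue_restr[OF A a that refl] .
  have into: "glue a c s v \<in> invols A \<and> partner a (glue a c s v) = c"
    if "s \<in> offsets a c" "v \<in> invols (A - {a, c})" for s v
    using glue_invols[OF A a c that] first by (simp add: partner_def)
  have onto: "offset a w \<in> offsets a c \<and> restr a c w \<in> invols (A - {a, c})"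
    if "w \<in> invols A" "partner a w = c" for w
    using offset_mem[OF A a that(1)] restr_invols[OF A a that] that(2) by simp
  show ?thesis
    by (rule bij_betw_byWitness[where f' = "\<lambda>w. (offset a w, restr a c w)"])
       (use left right into onto in auto)
qed

definition weight :: "(nat \<Rightarrow> nat) \<Rightarrow> real" where
  "weight w = (-1) ^ inv_w N w P"

lemma weight_glue:
  assumes a: "a < m" and c: "c < m" and v: "v \<in> invols (A - {a, c})"
  shows "weight (glue a c s v) =
           (-1) ^ card (Inv N P \<inter> moved_pairs (block a \<union> block c) (glue a c s v)) * weight v"
proof -
  have "block a \<union> block c \<subseteq> {1..N}" by (auto simp: block_def)
  moreover have "glue a c s v x \<in> block a \<union> block c" if "x \<in> block a \<union> block c" for x
    using that shift_in_block[OF a] shift_in_block[OF c] by (auto simp: glue_def)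
  ultimately have "inv_w N (glue a c s v) P =
      card (Inv N P \<inter> moved_pairs (block a \<union> block c) (glue a c s v)) + inv_w N v P"
    unfolding inv_w_def Pairs_eq_moved_pairs
    by (intro card_moved_pairs_modify)
       (auto simp: glue_def intro: invols_fixes_blocks[OF v])
  then show ?thesis by (simp add: weight_def power_add)
qed

text \<open>Pairing two different blocks creates no inversion, since inversions lie in one block.\<close>

lemma weight_glue_distinct:
  assumes a: "a < m" and c: "c < m" and ac: "a \<noteq> c" and v: "v \<in> invols (A - {a, c})"
  shows "weight (glue a c s v) = weight v"
proof -
  have "blk i \<noteq> blk (glue a c s v i)" if "i \<in> block a \<union> block c" for i
    using that ac shift_in_block[OF a] shift_in_block[OF c] by (auto simp: glue_def block_def)
  then have "{i, glue a c s v i} \<notin> Inv N P" if "i \<in> block a \<union> block c" for i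
    using that by (simp add: Inv_P_iff)
  then have "Inv N P \<inter> moved_pairs (block a \<union> block c) (glue a c s v) = {}"
    by (auto simp: moved_pairs_def)
  then show ?thesis using weight_glue[OF a c v] by simp
qed

lemma glue_zero: "v \<in> invols (A - {a}) \<Longrightarrow> glue a a 0 v = v"
  using invols_fixes_blocks[of v A a a] block_points[of _ a]
  by (auto simp: fun_eq_iff glue_def shift_def)

definition block_sum :: "nat set \<Rightarrow> real" where
  "block_sum A = sum weight (invols A)"

lemma block_sum_by_partner:
  assumes A: "A \<subseteq> {..<m}" and a: "a \<in> A"
  shows "block_sum A = (\<Sum>c \<in> A. sum weight {w \<in> invols A. partner a w = c})"
proof -
  have "finite A" using A finite_subset by blast
  then show ?thesis
    unfolding block_sum_def
    by (intro sum.group[symmetric] finite_invols) (use partner_mem[OF A a] in auto)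
qed

lemma partner_sum:
  assumes A: "A \<subseteq> {..<m}" and a: "a \<in> A" and c: "c \<in> A"
  shows "sum weight {w \<in> invols A. partner a w = c} =
           (\<Sum>s \<in> offsets a c. \<Sum>v \<in> invols (A - {a, c}). weight (glue a c s v))"
proof -
  have "sum weight {w \<in> invols A. partner a w = c} =
        (\<Sum>(s, v) \<in> offsets a c \<times> invols (A - {a, c}). weight (glue a c s v))"
    using sum.reindex_bij_betw[OF glue_bij[OF A a c], of weight] by (simp add: case_prod_beta')
  then show ?thesis by (simp add: sum.cartesian_product)
qed

lemma partner_sum_distinct:
  assumes A: "A \<subseteq> {..<m}" and a: "a \<in> A" and c: "c \<in> A" and ac: "a \<noteq> c"
  shows "sum weight {w \<in> invols A. partner a w = c} = real r * block_sum (A - {a, c})"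
proof -
  have "offsets a c = {..<r}" using ac by (auto simp: offsets_def)
  moreover have "a < m" "c < m" using A a c by auto
  ultimately show ?thesis
    using partner_sum[OF A a c] weight_glue_distinct[OF _ _ ac] by (simp add: block_sum_def)
qed

lemma invols_empty: "invols {} = {id}"
  by (auto simp: invols_def support_def fun_eq_iff)

lemma block_sum_empty: "block_sum {} = 1"
  by (simp add: block_sum_def invols_empty weight_def inv_w_def Pairs_def)

lemma invols_all_blocks: "invols {..<m} = involutions N \<inter> centralizer N P"
proof -
  have supp: "support {..<m} = {1..N}" using blk_less by (auto simp: support_def)
  show ?thesis
  proof (intro equalityI subsetI)
    fix w assume w: "w \<in> invols {..<m}"
    have "w permutes {1..N}"
      by (rule involution_permutes) (use involsD[OF w] supp in auto)
    moreover have "w \<circ> w = id" "w \<circ> P = P \<circ> w"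
      using involsD(2,3)[OF w] by (simp_all add: fun_eq_iff)
    ultimately show "w \<in> involutions N \<inter> centralizer N P"
      by (simp add: involutions_def centralizer_def)
  next
    fix w assume "w \<in> involutions N \<inter> centralizer N P"
    then have p: "w permutes {1..N}" and ww: "w \<circ> w = id" and wP: "w \<circ> P = P \<circ> w"
      by (auto simp: involutions_def centralizer_def)
    show "w \<in> invols {..<m}"
    proof (rule involsI)
      show "w x = x" if "x \<notin> support {..<m}" for x
        using permutes_not_in[OF p] that supp by simp
      show "w (w x) = x" for x using fun_cong[OF ww, of x] by simp
      show "w (P x) = P (w x)" for x using fun_cong[OF wP, of x] by simp
    qed
  qed
qed

end

section \<open>Blocks of even length\<close>

text \<open>Shifting by half a block: the position arithmetic used for blocks of length 2h.\<close>

lemma half_rotation_mod: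
  fixes h p :: nat
  assumes "1 \<le> h" "p < 2 * h"
  shows "(h + p) mod (2 * h) \<noteq> p" and "(h + p) mod (2 * h) = 2 * h - 1 \<longleftrightarrow> p = h - 1"
proof -
  have "(h + p) mod (2 * h) = (if p < h then h + p else p - h)"
    using assms by (auto simp: le_mod_geq)
  then show "(h + p) mod (2 * h) \<noteq> p" and "(h + p) mod (2 * h) = 2 * h - 1 \<longleftrightarrow> p = h - 1"
    using assms by auto
qed

lemma half_offsets:
  fixes h s :: nat
  assumes "1 \<le> h"
  shows "(s < 2 * h \<and> (2 * s) mod (2 * h) = 0) \<longleftrightarrow> s = 0 \<or> s = h"
proof (cases "s < h")
  case False
  then have "s < 2 * h \<Longrightarrow> (2 * s) mod (2 * h) = 2 * s - 2 * h"
    by (simp add: le_mod_geq)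
  then show ?thesis using False assms by auto
qed (use assms in auto)

locale even_cycle_blocks = cycle_blocks +
  assumes r_even: "even r"
begin

abbreviation h :: nat where "h \<equiv> r div 2"

lemma two_h: "2 * h = r" and h_pos: "1 \<le> h"
  using r_even r_pos by auto

lemma offsets_self: "offsets a a = {0, h}"
  using half_offsets[OF h_pos] two_h by (auto simp: offsets_def)

lemma half_turn_inversions:
  assumes a: "a < m"
  shows "Inv N P \<inter> moved_pairs (block a) (glue a a h v) = {{point a (h - 1), point a (r - 1)}}"
proof -
  let ?g = "glue a a h v" and ?p = "{point a (h - 1), point a (r - 1)}"
  have g: "?g i = point a (h + pos i)" if "i \<in> block a" for i
    using that by (simp add: glue_def shift_def)
  have inv_iff: "?g i \<noteq> i \<and> ({i, ?g i} \<in> Inv N P \<longleftrightarrow> pos i = h - 1 \<or> pos i = r - 1)"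
    if i: "i \<in> block a" for i
  proof -
    have "?g i \<in> block a" using g[OF i] point_in_block[OF a] by simp
    moreover have "pos (?g i) \<noteq> pos i" "pos (?g i) = r - 1 \<longleftrightarrow> pos i = h - 1"
      using g[OF i] half_rotation_mod[OF h_pos, of "pos i"] two_h pos_less[of i] by simp_all
    ultimately show ?thesis using i Inv_P_iff by (auto simp: block_def)
  qed
  have pair: "{i, ?g i} = ?p" if i: "i \<in> block a" and "pos i = h - 1 \<or> pos i = r - 1" for i
  proof -
    have "h + (h - 1) = r - 1" "h + (r - 1) = (h - 1) + r" using two_h h_pos by simp_all
    then show ?thesis using that g[OF i] block_points[OF i] by auto
  qed
  let ?i = "point a (h - 1)"
  have "h - 1 < r" using two_h h_pos by linarith
  then have i: "?i \<in> block a" "pos ?i = h - 1"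
    using point_in_block[OF a] by simp_all
  then have "{?i, ?g ?i} = ?p" "{?i, ?g ?i} \<in> Inv N P" "?g ?i \<noteq> ?i"
    using pair[OF i(1)] inv_iff[OF i(1)] by simp_all
  then have "?p \<in> Inv N P \<inter> moved_pairs (block a) ?g"
    using i(1) unfolding moved_pairs_def by force
  moreover have "e = ?p" if "e \<in> Inv N P \<inter> moved_pairs (block a) ?g" for e
    using that inv_iff pair by (auto simp: moved_pairs_def)
  ultimately show ?thesis by blast
qed

lemma weight_glue_half:
  assumes a: "a < m" and v: "v \<in> invols (A - {a})"
  shows "weight (glue a a h v) = - weight v"
proof -
  have v': "v \<in> invols (A - {a, a})" using v by simp
  show ?thesis using weight_glue[OF a a v', of h] half_turn_inversions[OF a, of v] by simp
qed

text \<open>If block a is paired with itself, the offsets 0 and h cancel.\<close>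

lemma partner_sum_self:
  assumes A: "A \<subseteq> {..<m}" and a: "a \<in> A"
  shows "sum weight {w \<in> invols A. partner a w = a} = 0"
proof -
  have "a < m" using A a by auto
  then have "weight (glue a a 0 v) + weight (glue a a h v) = 0" if "v \<in> invols (A - {a})" for v
    using that glue_zero weight_glue_half by simp
  then show ?thesis
    using partner_sum[OF A a a] offsets_self h_pos by (simp add: sum.distrib[symmetric])
qed

lemma block_sum_step:
  assumes A: "A \<subseteq> {..<m}" and a: "a \<in> A"
  shows "block_sum A = (\<Sum>c \<in> A - {a}. real r * block_sum (A - {a, c}))"
proof -
  have "finite A" using A finite_subset by blast
  then have "block_sum A = sum weight {w \<in> invols A. partner a w = a}
      + (\<Sum>c \<in> A - {a}. sum weight {w \<in> invols A. partner a w = c})"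
    using block_sum_by_partner[OF A a] sum.remove[OF _ a] by simp
  also have "\<dots> = (\<Sum>c \<in> A - {a}. sum weight {w \<in> invols A. partner a w = c})"
    using partner_sum_self[OF A a] by simp
  also have "\<dots> = (\<Sum>c \<in> A - {a}. real r * block_sum (A - {a, c}))"
    using partner_sum_distinct[OF A a] by (intro sum.cong) auto
  finally show ?thesis .
qed

lemma block_sum_closed: "A \<subseteq> {..<m} \<Longrightarrow> block_sum A = matching_weight r (card A)"
proof (induction "card A" arbitrary: A rule: less_induct)
  case less
  show ?case
  proof (cases "A = {}")
    case False
    then obtain a where a: "a \<in> A" by blast
    have fin: "finite A" using less.prems finite_subset by blast
    have "block_sum (A - {a, c}) = matching_weight r (card A - 2)" if c: "c \<in> A - {a}" for c
    proof -
      have "card (A - {a, c}) = card A - 2" using a c fin by (simp add: card_Diff_subset)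
      moreover have "card (A - {a, c}) < card A" using a c fin by (intro psubset_card_mono) auto
      ultimately show ?thesis using less.hyps[of "A - {a, c}"] less.prems by auto
    qed
    then have "block_sum A = real (card A - 1) * real r * matching_weight r (card A - 2)"
      using block_sum_step[OF less.prems a] fin a by simp
    also have "\<dots> = matching_weight r (card A)"
    proof -
      have "0 < card A" using fin a card_gt_0_iff by blast
      then show ?thesis by (simp add: matching_weight_step)
    qed
    finally show ?thesis .
  qed (simp add: block_sum_empty)
qed

end

theorem lemma3p4:
  fixes n r :: nat
  assumes "0 < r" and "even r" and "r dvd n"
  shows "(\<Sum>w \<in> involutions n \<inter> centralizer n (cycprod n r).
            (-1::real) ^ inv_w n w (cycprod n r)) =
         (if odd (n div r) then 0
          else fact (n div r) / (fact (n div (2*r)) * 2 ^ (n div (2*r)))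
               * real r ^ (n div (2*r)))"
proof -
  define m where "m = n div r"
  have n: "n = m * r" using assms(3) by (simp add: m_def)
  interpret even_cycle_blocks m r using assms(1,2) by unfold_locales
  have "n div (2 * r) = m div 2" by (simp add: m_def div_mult2_eq mult.commute)
  moreover have "(\<Sum>w \<in> involutions n \<inter> centralizer n (cycprod n r).
            (-1::real) ^ inv_w n w (cycprod n r)) = block_sum {..<m}"
    unfolding n block_sum_def invols_all_blocks weight_def ..
  ultimately show ?thesis
    using block_sum_closed[of "{..<m}"] matching_weight_closed[of r m] by (simp add: m_def)
qed

end
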